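(* For $n\in\mathbb{Z}^+$ we have $$\begin{aligned}&t(1,4,15;n)=2N(1,4,15;2n+5)&&\text{for } n\equiv 0\pmod 4,\\ &t(1,12,15;n)=2N(1,12,15;2n+7)&&\text{for } n\equiv 2\pmod 4,\\ &t(1,15,20;n)=2N(1,15,20;2n+9)&&\text{for } n\equiv 2\pmod 4,\\ &t(3,4,45;n)=2N(3,4,45;2n+13)&&\text{for } n\equiv 2\pmod 4.\end{aligned}$$
   Context: $\mathbb{Z}^+$ is the set of positive integers. For $a,b,c\in\mathbb{Z}^+$ and nonnegative integer $n$, $N(a,b,c;n)$ denotes the number of triples $(x,y,z)\in\mathbb{Z}^3$ with $n=ax^2+by^2+cz^2$, and $t(a,b,c;n)$ denotes the number of triples $(x,y,z)\in\mathbb{Z}^3$ with $n=a\frac{x(x+1)}2+b\frac{y(y+1)}2+c\frac{z(z+1)}2$. *)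

theory Defs
  imports Main
begin

definition N :: "int \<Rightarrow> int \<Rightarrow> int \<Rightarrow> int \<Rightarrow> nat" where
  "N a b c n = card {(x::int, y::int, z::int). n = a * x^2 + b * y^2 + c * z^2}"

definition t :: "int \<Rightarrow> int \<Rightarrow> int \<Rightarrow> int \<Rightarrow> nat" where
  "t a b c n = card {(x::int, y::int, z::int).
     n = a * (x * (x + 1) div 2) + b * (y * (y + 1) div 2) + c * (z * (z + 1) div 2)}"

end

theory Submission
  imports Defs "HOL-Library.Equipollence"
begin

(* Substituting u = 2x + 1, v = 2y + 1, w = 2z + 1, t(a,b,c;n) counts the triples of odd integers
   with a u^2 + b v^2 + c w^2 = 8n + a + b + c.  Fixing one of the three coordinates, the
   identities reduce to two facts about the binary forms X^2 + D Y^2 for D = 3 and D = 15, both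
   coming from multiplication of X + Y sqrt(-D) by an element of small norm:
   - multiplication by 1 - sqrt(-D), of norm 1 + D, followed or not by conjugation, is a 2-to-1
     correspondence between pairs of opposite parity and odd pairs (a, b) with 1 + D dividing
     a - b or a + b; for D = 3 this is every odd pair, for D = 15 it means a^2 + 15 b^2 = 16 mod 32;
   - multiplication by an element of norm 4 of Z[(1 + sqrt(-15))/2] is a bijection between odd
     pairs and the odd pairs with a^2 + 15 b^2 = 0 mod 32.
   One or two such steps turn the odd representations into representations in which one
   coordinate of the target form is doubled, and congruences mod 8 show that every representation
   counted by N has this shape. *)

lemma eqpoll_card: "A \<approx> B \<Longrightarrow> card A = card B"
  by (metis eqpoll_def bij_betw_same_card)

lemma eqpoll_byWitness:
  assumes "\<And>x. x \<in> A \<Longrightarrow> f x \<in> B \<and> g (f x) = x" and "\<And>y. y \<in> B \<Longrightarrow> g y \<in> A \<and> f (g y) = y"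
  shows "A \<approx> B"
proof -
  have "bij_betw f A B"
    by (rule bij_betw_byWitness[where f' = g]) (use assms in \<open>blast+\<close>)
  then show ?thesis unfolding eqpoll_def by blast
qed

lemma card_swap12: "card {(x, y, z). P x y z} = card {(x, y, z). P y x z}"
  by (rule bij_betw_same_card[of "\<lambda>(x, y, z). (y, x, z)"])
    (auto intro!: bij_betw_byWitness[where f' = "\<lambda>(x, y, z). (y, x, z)"])

lemma card_swap23: "card {(x, y, z). P x y z} = card {(x, y, z). P x z y}"
  by (rule bij_betw_same_card[of "\<lambda>(x, y, z). (x, z, y)"])
    (auto intro!: bij_betw_byWitness[where f' = "\<lambda>(x, y, z). (x, z, y)"])

lemma N_swap12: "N a b c m = N b a c m"
  unfolding N_def by (subst card_swap12) (simp add: ac_simps)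

lemma N_swap23: "N a b c m = N a c b m"
  unfolding N_def by (subst card_swap23) (simp add: ac_simps)

lemma card_triples_fibrewise:
  assumes "\<And>x. {(y, z). F x y z} \<approx> {(c, d). G x c d}"
  shows "card {(x, y, z). F x y z} = card {(x, c, d). G x c d}"
proof -
  have "Sigma UNIV (\<lambda>x. {(y, z). F x y z}) \<approx> Sigma UNIV (\<lambda>x. {(c, d). G x c d})"
    by (rule Sigma_eqpoll_cong[OF bij_betw_id]) (simp add: assms)
  moreover have "{(x, y, z). F x y z} = Sigma UNIV (\<lambda>x. {(y, z). F x y z})"
    "{(x, c, d). G x c d} = Sigma UNIV (\<lambda>x. {(c, d). G x c d})" by auto
  ultimately show ?thesis by (simp add: eqpoll_card)
qed

lemma card_triples_fibrewise_double:
  assumes "\<And>x. {(y, z). F x y z} \<approx> {(c, d). G x c d} \<times> (UNIV :: bool set)"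
  shows "card {(x, y, z). F x y z} = 2 * card {(x, c, d). G x c d}"
proof -
  let ?G = "\<lambda>x. {(c, d). G x c d}"
  have "Sigma UNIV (\<lambda>x. {(y, z). F x y z}) \<approx> Sigma UNIV (\<lambda>x. ?G x \<times> (UNIV :: bool set))"
    by (rule Sigma_eqpoll_cong[OF bij_betw_id]) (simp add: assms)
  also have "\<dots> \<approx> Sigma UNIV ?G \<times> (UNIV :: bool set)"
    by (rule eqpoll_byWitness[where f = "\<lambda>(x, cd, s). ((x, cd), s)" and g = "\<lambda>((x, cd), s). (x, cd, s)"])
      auto
  finally have "card (Sigma UNIV (\<lambda>x. {(y, z). F x y z})) = card (Sigma UNIV ?G) * 2"
    by (simp add: eqpoll_card card_cartesian_product)
  moreover have "{(x, y, z). F x y z} = Sigma UNIV (\<lambda>x. {(y, z). F x y z})"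
    "{(x, c, d). G x c d} = Sigma UNIV ?G" by auto
  ultimately show ?thesis by simp
qed

definition odd_reps :: "int \<Rightarrow> int \<Rightarrow> int \<Rightarrow> int \<Rightarrow> nat" where
  "odd_reps a b c m = card {(x, y, z). odd x \<and> odd y \<and> odd z \<and> a*x\<^sup>2 + b*y\<^sup>2 + c*z\<^sup>2 = m}"

lemma odd_reps_swap12: "odd_reps a b c m = odd_reps b a c m"
  unfolding odd_reps_def by (subst card_swap12) (simp add: ac_simps)

lemma odd_reps_swap23: "odd_reps a b c m = odd_reps a c b m"
  unfolding odd_reps_def by (subst card_swap23) (simp add: ac_simps)

lemma triangular_square: "(2*x + 1)\<^sup>2 = 8 * (x * (x + 1) div 2) + (1::int)"
proof -
  have "x * (x + 1) = 2 * (x * (x + 1) div 2)" by simp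
  moreover have "(2*x + 1)\<^sup>2 = 4 * (x * (x + 1)) + 1" by (simp add: power2_eq_square algebra_simps)
  ultimately show ?thesis by linarith
qed

lemma t_eq_odd_reps: "t a b c n = odd_reps a b c (8*n + a + b + c)"
proof -
  let ?T = "{(x, y, z). n = a * (x * (x + 1) div 2) + b * (y * (y + 1) div 2) + c * (z * (z + 1) div 2)}"
  let ?O = "{(u, v, w). odd u \<and> odd v \<and> odd w \<and> a*u\<^sup>2 + b*v\<^sup>2 + c*w\<^sup>2 = 8*n + a + b + c}"
  have eq: "n = a * (x * (x + 1) div 2) + b * (y * (y + 1) div 2) + c * (z * (z + 1) div 2)
      \<longleftrightarrow> a*(2*x + 1)\<^sup>2 + b*(2*y + 1)\<^sup>2 + c*(2*z + 1)\<^sup>2 = 8*n + a + b + c" for x y z :: int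
    unfolding triangular_square by (auto simp: algebra_simps)
  have "bij_betw (\<lambda>(x, y, z). (2*x + 1, 2*y + 1, 2*z + 1)) ?T ?O"
    by (rule bij_betw_byWitness[where f' = "\<lambda>(u, v, w). (u div 2, v div 2, w div 2)"])
      (auto simp: eq odd_two_times_div_two_succ)
  then show ?thesis unfolding t_def odd_reps_def by (rule bij_betw_same_card)
qed

lemma odd_power2_eq:
  fixes x :: int
  assumes "odd x"
  obtains j where "x\<^sup>2 = 8*j + 1"
proof -
  obtain k where x: "x = 2*k + 1" using assms by (rule oddE)
  have "even (k * (k + 1))" by simp
  then obtain l where "k * (k + 1) = 2*l" ..
  then have "x\<^sup>2 = 8*l + 1" unfolding x by (simp add: power2_eq_square algebra_simps)
  then show ?thesis by (rule that)
qed

lemma power2_mod_decomp: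
  fixes x m :: int
  assumes "even m"
  shows "\<exists>k. x\<^sup>2 = (x mod m)\<^sup>2 + 2*m*k"
proof -
  define r where "r = x mod m"
  obtain q where x: "x = m*q + r" unfolding r_def by (metis div_mult_mod_eq mult.commute)
  obtain h where m: "m = 2*h" using assms ..
  have "x\<^sup>2 = r\<^sup>2 + 2*m*(q*r + h*q\<^sup>2)"
    unfolding x m by (simp add: power2_eq_square algebra_simps)
  then show ?thesis unfolding r_def by blast
qed

lemma odd_mod16: "odd (u::int) \<Longrightarrow> u mod 16 \<in> {1, 3, 5, 7, 9, 11, 13, 15}"
  unfolding insert_iff empty_iff by presburger

lemma odd_norm15_mod32:
  fixes u w :: int
  assumes "odd u" "odd w"
  shows "32 dvd u\<^sup>2 + 15*w\<^sup>2 \<Longrightarrow> (u - w) mod 16 = 8 \<or> (u + w) mod 16 = 8"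
    and "(u\<^sup>2 + 15*w\<^sup>2) mod 32 = 16 \<Longrightarrow> 16 dvd u - w \<or> 16 dvd u + w"
proof -
  obtain a b where a: "a = u mod 16" and b: "b = w mod 16" by simp
  obtain k l where "u\<^sup>2 = a\<^sup>2 + 32*k" "w\<^sup>2 = b\<^sup>2 + 32*l"
    using power2_mod_decomp[of 16 u] power2_mod_decomp[of 16 w] unfolding a b by auto
  then have "u\<^sup>2 + 15*w\<^sup>2 = a\<^sup>2 + 15*b\<^sup>2 + 32*(k + 15*l)" by simp
  then have norm: "(u\<^sup>2 + 15*w\<^sup>2) mod 32 = (a\<^sup>2 + 15*b\<^sup>2) mod 32" by (simp only: mod_mult_self2)
  have sum_diff: "(u - w) mod 16 = (a - b) mod 16" "(u + w) mod 16 = (a + b) mod 16"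
    unfolding a b by (simp_all add: mod_diff_eq mod_add_eq)
  have "a \<in> {1, 3, 5, 7, 9, 11, 13, 15}" "b \<in> {1, 3, 5, 7, 9, 11, 13, 15}"
    using odd_mod16[OF assms(1)] odd_mod16[OF assms(2)] unfolding a b .
  then have "((a\<^sup>2 + 15*b\<^sup>2) mod 32 = 0 \<longrightarrow> (a - b) mod 16 = 8 \<or> (a + b) mod 16 = 8)
    \<and> ((a\<^sup>2 + 15*b\<^sup>2) mod 32 = 16 \<longrightarrow> (a - b) mod 16 = 0 \<or> (a + b) mod 16 = 0)"
    by (elim insertE emptyE) simp_all
  then show "32 dvd u\<^sup>2 + 15*w\<^sup>2 \<Longrightarrow> (u - w) mod 16 = 8 \<or> (u + w) mod 16 = 8"
    and "(u\<^sup>2 + 15*w\<^sup>2) mod 32 = 16 \<Longrightarrow> 16 dvd u - w \<or> 16 dvd u + w"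
    unfolding norm sum_diff dvd_eq_mod_eq_0 by simp_all
qed

lemma odd_dvd_mult_cancel:
  fixes l s :: int
  assumes "odd l" "2^k dvd l * s"
  shows "2^k dvd s"
proof -
  have "coprime (2^k) l" using assms(1) by simp
  then show ?thesis using assms(2) by (simp add: coprime_dvd_mult_right_iff)
qed

lemma fibre_norm_dvd_32:
  fixes \<alpha> \<mu> m x s :: int
  assumes "odd \<mu>" "odd x" "8 dvd m - \<alpha>" and eq: "4*\<alpha>*x\<^sup>2 + \<mu>*s = 4*m"
  shows "32 dvd s"
proof -
  obtain i where "x\<^sup>2 = 8*i + 1" using assms(2) by (rule odd_power2_eq)
  moreover obtain t where "m - \<alpha> = 8*t" using assms(3) ..
  ultimately have "\<mu>*s = 2^5 * (t - \<alpha>*i)" using eq by (simp add: algebra_simps)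
  then show ?thesis using odd_dvd_mult_cancel[OF assms(1), of 5 s] by simp
qed

lemma fibre_norm_mod_32:
  fixes \<alpha> \<mu> m x s :: int
  assumes "odd \<mu>" "odd x" "8 dvd m - \<alpha> - 4" and eq: "4*\<alpha>*x\<^sup>2 + \<mu>*s = 4*m"
  shows "s mod 32 = 16"
proof -
  obtain i where "x\<^sup>2 = 8*i + 1" using assms(2) by (rule odd_power2_eq)
  moreover obtain t where "m - \<alpha> - 4 = 8*t" using assms(3) ..
  ultimately have \<mu>s: "\<mu>*s = 2^4 * (2*(t - \<alpha>*i) + 1)" using eq by (simp add: algebra_simps)
  then have "2^4 dvd s" using odd_dvd_mult_cancel[OF assms(1)] by (metis dvd_triv_left)
  then obtain s' where s: "s = 16*s'" by (auto elim: dvdE)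
  with \<mu>s have "16 * (\<mu>*s') = 16 * (2*(t - \<alpha>*i) + 1)" by (simp add: ac_simps)
  then have "\<mu>*s' = 2*(t - \<alpha>*i) + 1" by presburger
  then have "odd (\<mu>*s')" by simp
  then have "odd s'" by simp
  then show ?thesis unfolding s by presburger
qed

lemma solution_parities:
  fixes a \<beta> \<gamma> m x y z :: int
  assumes odd: "odd a" "odd \<beta>" "odd \<gamma>" and res: "4 dvd \<gamma> - a - 2" "8 dvd m - a - 4*\<beta>"
    and sol: "a*x\<^sup>2 + 4*\<beta>*y\<^sup>2 + \<gamma>*z\<^sup>2 = m"
  shows "odd x \<and> even z \<and> odd (y + z div 2)"
proof -
  obtain s t where s: "\<gamma> - a - 2 = 4*s" and t: "m - a - 4*\<beta> = 8*t" using res by (elim dvdE)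
  have "odd m" using odd(1) t by presburger
  have "odd x"
  proof
    assume "even x"
    then obtain e where "x = 2*e" ..
    then have "\<gamma>*z\<^sup>2 = m - 4*(a*e\<^sup>2 + \<beta>*y\<^sup>2)" using sol by (simp add: power2_eq_square algebra_simps)
    then have "odd (\<gamma>*z\<^sup>2)" using \<open>odd m\<close> by simp
    then have "odd z" by simp
    then obtain j where "z\<^sup>2 = 8*j + 1" by (rule odd_power2_eq)
    then have "m = \<gamma> + 4*(a*e\<^sup>2 + \<beta>*y\<^sup>2 + 2*\<gamma>*j)"
      using sol \<open>x = 2*e\<close> by (simp add: power2_eq_square algebra_simps)
    then show False using s t by presburger
  qed
  then obtain i where i: "x\<^sup>2 = 8*i + 1" by (rule odd_power2_eq)
  have yz: "4*\<beta>*y\<^sup>2 + \<gamma>*z\<^sup>2 = m - a - 8*(a*i)" using sol i by (simp add: algebra_simps)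
  have "even z"
  proof (rule ccontr)
    assume "odd z"
    then have "odd (m - a - 8*(a*i))" unfolding yz[symmetric] using odd(3) by simp
    then show False using \<open>odd m\<close> odd(1) by simp
  qed
  then obtain d where z: "z = 2*d" ..
  have "4*(\<beta>*y\<^sup>2 + \<gamma>*d\<^sup>2) = m - a - 8*(a*i)"
    using yz unfolding z by (simp add: power2_eq_square algebra_simps)
  moreover have "odd S" if "4*S = m - a - 8*T" for S T using that odd(2) t by presburger
  ultimately have "odd (\<beta>*y\<^sup>2 + \<gamma>*d\<^sup>2)" by blast
  then have "odd (y + d)" using odd(2,3) by (simp add: even_mult_iff)
  then show ?thesis using \<open>odd x\<close> \<open>even z\<close> unfolding z by simp
qed

section \<open>Multiplication by 1 - sqrt(-D)\<close>

lemma twisted_norm_identity: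
  fixes c d D :: "'a::comm_ring_1"
  shows "(c + D*d)\<^sup>2 + D*(c - d)\<^sup>2 = (1 + D) * (c\<^sup>2 + D*d\<^sup>2)"
  by (simp add: power2_eq_square algebra_simps)

(* (c + D d, d - c) are the coordinates of (c + d sqrt(-D)) (1 - sqrt(-D)); s = True conjugates. *)
definition twist :: "int \<Rightarrow> (int \<times> int) \<times> bool \<Rightarrow> int \<times> int" where
  "twist D = (\<lambda>((c, d), s). (c + D*d, if s then c - d else d - c))"

definition untwist :: "int \<Rightarrow> int \<times> int \<Rightarrow> (int \<times> int) \<times> bool" where
  "untwist D = (\<lambda>(a, b).
     if (1 + D) dvd a - b then ((b + (a - b) div (1 + D), (a - b) div (1 + D)), True)
     else ((- b + (a + b) div (1 + D), (a + b) div (1 + D)), False))"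

lemma twist_norm: "twist D ((c, d), s) = (a, b) \<Longrightarrow> a\<^sup>2 + D*b\<^sup>2 = (1 + D) * (c\<^sup>2 + D*d\<^sup>2)"
  using twisted_norm_identity[of c D d] by (cases s) (auto simp: twist_def power2_commute)

lemma twist_odd:
  assumes "odd D" "odd (c + d)" "twist D ((c, d), s) = (a, b)"
  shows "odd a \<and> odd b"
proof -
  have "odd (c + D*d)" "odd (c - d)" "odd (d - c)" using assms(1,2) by (auto simp: even_add even_mult_iff)
  then show ?thesis using assms(3) by (cases s) (auto simp: twist_def)
qed

lemma not_dvd_diff_and_sum:
  fixes k a b :: int
  assumes "4 dvd k" "odd b"
  shows "\<not> (k dvd a - b \<and> k dvd a + b)"
proof
  assume "k dvd a - b \<and> k dvd a + b"
  then have "4 dvd (a + b) - (a - b)" using assms(1) by (meson dvd_diff dvd_trans)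
  then show False using \<open>odd b\<close> by presburger
qed

lemma untwist_twist:
  assumes "0 < D" "4 dvd 1 + D" "odd (c + d)"
  shows "untwist D (twist D ((c, d), s)) = ((c, d), s)"
proof -
  have "1 + D \<noteq> 0" using assms(1) by simp
  have "odd (c - d)" "odd (d - c)" using assms(3) by presburger+
  moreover have "c + D*d - (c - d) = (1 + D) * d" "c + D*d + (d - c) = (1 + D) * d"
    by (simp_all add: algebra_simps)
  ultimately show ?thesis
    using not_dvd_diff_and_sum[OF assms(2), of "c - d" "c + D*d"]
      not_dvd_diff_and_sum[OF assms(2), of "d - c" "c + D*d"] \<open>1 + D \<noteq> 0\<close>
    by (cases s) (auto simp: twist_def untwist_def)
qed

lemma twist_untwist:
  assumes "0 < D" "odd b" and dvd: "(1 + D) dvd a - b \<or> (1 + D) dvd a + b"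
    and untwist: "untwist D (a, b) = ((c, d), s)"
  shows "twist D ((c, d), s) = (a, b) \<and> odd (c + d)"
proof (cases "(1 + D) dvd a - b")
  case True
  then obtain q where q: "a - b = (1 + D) * q" ..
  then have "((c, d), s) = ((b + q, q), True)" using True \<open>0 < D\<close> untwist by (simp add: untwist_def)
  moreover have "b + q + D * q = a" using q by (simp add: algebra_simps)
  ultimately show ?thesis using \<open>odd b\<close> by (simp add: twist_def)
next
  case False
  then obtain q where q: "a + b = (1 + D) * q" using dvd by blast
  then have "((c, d), s) = ((- b + q, q), False)" using False \<open>0 < D\<close> untwist by (simp add: untwist_def)
  moreover have "- b + q + D * q = a" using q by (simp add: algebra_simps)
  ultimately show ?thesis using \<open>odd b\<close> by (simp add: twist_def)
qed

lemma twisted_pairs_eqpoll: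
  fixes D :: int and P :: "int \<Rightarrow> bool"
  assumes "0 < D" "4 dvd 1 + D"
    and split: "\<And>a b. odd a \<Longrightarrow> odd b \<Longrightarrow> P (a\<^sup>2 + D*b\<^sup>2) \<Longrightarrow> (1 + D) dvd a - b \<or> (1 + D) dvd a + b"
  shows "{(a, b). odd a \<and> odd b \<and> P (a\<^sup>2 + D*b\<^sup>2)}
    \<approx> {(c, d). odd (c + d) \<and> P ((1 + D) * (c\<^sup>2 + D*d\<^sup>2))} \<times> (UNIV :: bool set)"
  (is "?A \<approx> ?C \<times> _")
proof -
  have "odd D" using assms(2) by presburger
  have up: "twist D x \<in> ?A \<and> untwist D (twist D x) = x" if C: "x \<in> ?C \<times> UNIV" for x
  proof -
    obtain c d s where x: "x = ((c, d), s)" "odd (c + d)" "P ((1 + D) * (c\<^sup>2 + D*d\<^sup>2))"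
      using C by blast
    obtain a b where ab: "twist D ((c, d), s) = (a, b)" by (cases "twist D ((c, d), s)")
    show ?thesis
      using twist_odd[OF \<open>odd D\<close> x(2) ab] twist_norm[OF ab] untwist_twist[OF assms(1,2) x(2), of s] x(3)
      unfolding x(1) ab by simp
  qed
  have down: "untwist D y \<in> ?C \<times> UNIV \<and> twist D (untwist D y) = y" if A: "y \<in> ?A" for y
  proof -
    obtain a b where y: "y = (a, b)" "odd a" "odd b" "P (a\<^sup>2 + D*b\<^sup>2)" using A by blast
    obtain c d s where cds: "untwist D (a, b) = ((c, d), s)" by (metis prod.exhaust)
    have "twist D ((c, d), s) = (a, b)" "odd (c + d)"
      using twist_untwist[OF assms(1) y(3) split[OF y(2-4)] cds] by auto
    then show ?thesis using twist_norm y(4) unfolding y(1) cds by auto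
  qed
  have "?C \<times> (UNIV :: bool set) \<approx> ?A" by (rule eqpoll_byWitness[OF up down])
  then show ?thesis by (rule eqpoll_sym)
qed

section \<open>Multiplication by an element of norm 4\<close>

(* Multiplication of p + r sqrt(-15) by -(1 + sqrt(-15))/2 or by (1 - sqrt(-15))/2, both of norm 4;
   the choice keeps both coordinates odd. *)
definition mul_norm4 :: "int \<times> int \<Rightarrow> int \<times> int" where
  "mul_norm4 = (\<lambda>(p, r). if 4 dvd p - r then ((15*r - p) div 2, - (p + r) div 2)
                         else ((15*r + p) div 2, (r - p) div 2))"

definition div_norm4 :: "int \<times> int \<Rightarrow> int \<times> int" where
  "div_norm4 = (\<lambda>(u, w). if (u - w) mod 16 = 8 then (- (u + 15*w) div 8, (u - w) div 8)
                         else ((u - 15*w) div 8, (u + w) div 8))"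

lemma mul_norm4_odd:
  fixes p r :: int
  assumes "odd p" "odd r" and mul: "mul_norm4 (p, r) = (u, w)"
  shows "odd u \<and> odd w \<and> u\<^sup>2 + 15*w\<^sup>2 = 4 * (p\<^sup>2 + 15*r\<^sup>2) \<and> div_norm4 (u, w) = (p, r)"
proof (cases "4 dvd p - r")
  case True
  then obtain j where j: "p = r + 4*j" by (metis dvd_def diff_eq_eq add.commute)
  then have uw: "u = 7*r - 2*j" "w = - r - 2*j" using mul unfolding mul_norm4_def by auto
  moreover have "(u - w) mod 16 = 8" unfolding uw using assms(2) by presburger
  ultimately show ?thesis using assms(2) unfolding uw j div_norm4_def
    by (simp add: power2_eq_square algebra_simps)
next
  case False
  have "\<exists>j. p = r + 4*j + 2" using False assms(1,2) by presburger
  then obtain j where j: "p = r + 4*j + 2" ..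
  then have uw: "u = 8*r + 2*j + 1" "w = - 2*j - 1" using mul False unfolding mul_norm4_def by auto
  moreover have "(u - w) mod 16 \<noteq> 8" unfolding uw using assms(2) by presburger
  ultimately show ?thesis unfolding uw j div_norm4_def
    by (simp add: power2_eq_square algebra_simps)
qed

lemma div_norm4_odd:
  fixes u w :: int
  assumes "odd w" and res: "(u - w) mod 16 = 8 \<or> (u + w) mod 16 = 8" and div: "div_norm4 (u, w) = (p, r)"
  shows "odd p \<and> odd r \<and> mul_norm4 (p, r) = (u, w)"
proof (cases "(u - w) mod 16 = 8")
  case True
  then have "\<exists>q. u = w + 16*q + 8" by presburger
  then obtain q where q: "u = w + 16*q + 8" ..
  then have pr: "p = - 2*(q + w) - 1" "r = 2*q + 1" using div True unfolding div_norm4_def by auto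
  have "4 dvd p - r" unfolding pr using \<open>odd w\<close> by presburger
  then show ?thesis unfolding pr q mul_norm4_def by simp
next
  case False
  then have "\<exists>q. u = 16*q + 8 - w" using res by presburger
  then obtain q where q: "u = 16*q + 8 - w" ..
  then have pr: "p = 2*(q - w) + 1" "r = 2*q + 1" using div False unfolding div_norm4_def by auto
  have "\<not> 4 dvd p - r" unfolding pr using \<open>odd w\<close> by presburger
  then show ?thesis unfolding pr q mul_norm4_def by simp
qed

lemma quartered_pairs_eqpoll:
  fixes P :: "int \<Rightarrow> bool"
  assumes "\<And>u w. odd u \<Longrightarrow> odd w \<Longrightarrow> P (u\<^sup>2 + 15*w\<^sup>2) \<Longrightarrow> 32 dvd u\<^sup>2 + 15*w\<^sup>2"
  shows "{(u, w). odd u \<and> odd w \<and> P (u\<^sup>2 + 15*w\<^sup>2)} \<approx> {(p, r). odd p \<and> odd r \<and> P (4 * (p\<^sup>2 + 15*r\<^sup>2))}"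
    (is "?A \<approx> ?B")
proof -
  have up: "mul_norm4 x \<in> ?A \<and> div_norm4 (mul_norm4 x) = x" if B: "x \<in> ?B" for x
  proof -
    obtain p r where x: "x = (p, r)" "odd p" "odd r" "P (4 * (p\<^sup>2 + 15*r\<^sup>2))" using B by blast
    obtain u w where uw: "mul_norm4 (p, r) = (u, w)" by (cases "mul_norm4 (p, r)")
    show ?thesis using mul_norm4_odd[OF x(2,3) uw] x(4) unfolding x(1) uw by simp
  qed
  have down: "div_norm4 y \<in> ?B \<and> mul_norm4 (div_norm4 y) = y" if A: "y \<in> ?A" for y
  proof -
    obtain u w where y: "y = (u, w)" "odd u" "odd w" "P (u\<^sup>2 + 15*w\<^sup>2)" using A by blast
    obtain p r where pr: "div_norm4 (u, w) = (p, r)" by (cases "div_norm4 (u, w)")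
    then have "odd p \<and> odd r \<and> mul_norm4 (p, r) = (u, w)"
      using div_norm4_odd[OF y(3) odd_norm15_mod32(1)[OF y(2,3) assms[OF y(2-4)]]] by simp
    then show ?thesis using mul_norm4_odd[of p r u w] y(4) unfolding y(1) pr by simp
  qed
  have "?B \<approx> ?A" by (rule eqpoll_byWitness[OF up down])
  then show ?thesis by (rule eqpoll_sym)
qed

lemma odd_reps_quarter:
  assumes "odd \<mu>" "8 dvd m - \<alpha>"
  shows "odd_reps (4*\<alpha>) \<mu> (15*\<mu>) (4*m) = odd_reps \<alpha> \<mu> (15*\<mu>) m"
proof -
  have "{(y, z). odd x \<and> odd y \<and> odd z \<and> 4*\<alpha>*x\<^sup>2 + \<mu>*y\<^sup>2 + 15*\<mu>*z\<^sup>2 = 4*m}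
      \<approx> {(p, r). odd x \<and> odd p \<and> odd r \<and> \<alpha>*x\<^sup>2 + \<mu>*p\<^sup>2 + 15*\<mu>*r\<^sup>2 = m}" for x
  proof -
    let ?P = "\<lambda>s. odd x \<and> 4*\<alpha>*x\<^sup>2 + \<mu>*s = 4*m"
    have "32 dvd s" if P: "?P s" for s
      using fibre_norm_dvd_32[OF assms(1) conjunct1[OF P] assms(2) conjunct2[OF P]] .
    then have "{(y, z). odd y \<and> odd z \<and> ?P (y\<^sup>2 + 15*z\<^sup>2)} \<approx> {(p, r). odd p \<and> odd r \<and> ?P (4 * (p\<^sup>2 + 15*r\<^sup>2))}"
      by (intro quartered_pairs_eqpoll)
    moreover have "{(y, z). odd y \<and> odd z \<and> ?P (y\<^sup>2 + 15*z\<^sup>2)}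
        = {(y, z). odd x \<and> odd y \<and> odd z \<and> 4*\<alpha>*x\<^sup>2 + \<mu>*y\<^sup>2 + 15*\<mu>*z\<^sup>2 = 4*m}"
      by (auto simp: algebra_simps)
    moreover have "{(p, r). odd p \<and> odd r \<and> ?P (4 * (p\<^sup>2 + 15*r\<^sup>2))}
        = {(p, r). odd x \<and> odd p \<and> odd r \<and> \<alpha>*x\<^sup>2 + \<mu>*p\<^sup>2 + 15*\<mu>*r\<^sup>2 = m}"
      by (auto simp: algebra_simps)
    ultimately show ?thesis by simp
  qed
  then show ?thesis unfolding odd_reps_def by (rule card_triples_fibrewise)
qed

lemma odd_reps_twist3:
  "odd_reps a \<mu> (3*\<mu>) m = 2 * card {(x, c, d). odd x \<and> odd (c + d) \<and> a*x\<^sup>2 + 4*\<mu>*c\<^sup>2 + 12*\<mu>*d\<^sup>2 = m}"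
proof -
  have "{(y, z). odd x \<and> odd y \<and> odd z \<and> a*x\<^sup>2 + \<mu>*y\<^sup>2 + 3*\<mu>*z\<^sup>2 = m}
      \<approx> {(c, d). odd x \<and> odd (c + d) \<and> a*x\<^sup>2 + 4*\<mu>*c\<^sup>2 + 12*\<mu>*d\<^sup>2 = m} \<times> (UNIV :: bool set)" for x
  proof -
    let ?P = "\<lambda>s. odd x \<and> a*x\<^sup>2 + \<mu>*s = m"
    have "(1 + 3) dvd y - z \<or> (1 + 3) dvd y + z" if "odd y" "odd z" for y z :: int
      using that by presburger
    then have "{(y, z). odd y \<and> odd z \<and> ?P (y\<^sup>2 + 3*z\<^sup>2)}
        \<approx> {(c, d). odd (c + d) \<and> ?P ((1 + 3) * (c\<^sup>2 + 3*d\<^sup>2))} \<times> (UNIV :: bool set)"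
      by (intro twisted_pairs_eqpoll) auto
    moreover have "{(y, z). odd y \<and> odd z \<and> ?P (y\<^sup>2 + 3*z\<^sup>2)}
        = {(y, z). odd x \<and> odd y \<and> odd z \<and> a*x\<^sup>2 + \<mu>*y\<^sup>2 + 3*\<mu>*z\<^sup>2 = m}"
      by (auto simp: algebra_simps)
    moreover have "{(c, d). odd (c + d) \<and> ?P ((1 + 3) * (c\<^sup>2 + 3*d\<^sup>2))}
        = {(c, d). odd x \<and> odd (c + d) \<and> a*x\<^sup>2 + 4*\<mu>*c\<^sup>2 + 12*\<mu>*d\<^sup>2 = m}"
      by (auto simp: algebra_simps)
    ultimately show ?thesis by simp
  qed
  then show ?thesis unfolding odd_reps_def by (rule card_triples_fibrewise_double)
qed

lemma odd_reps_twist15: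
  assumes "odd \<mu>" "8 dvd m - \<alpha> - 4"
  shows "odd_reps (4*\<alpha>) \<mu> (15*\<mu>) (4*m)
    = 2 * card {(x, c, d). odd x \<and> odd (c + d) \<and> \<alpha>*x\<^sup>2 + 4*\<mu>*c\<^sup>2 + 60*\<mu>*d\<^sup>2 = m}"
proof -
  have "{(y, z). odd x \<and> odd y \<and> odd z \<and> 4*\<alpha>*x\<^sup>2 + \<mu>*y\<^sup>2 + 15*\<mu>*z\<^sup>2 = 4*m}
      \<approx> {(c, d). odd x \<and> odd (c + d) \<and> \<alpha>*x\<^sup>2 + 4*\<mu>*c\<^sup>2 + 60*\<mu>*d\<^sup>2 = m} \<times> (UNIV :: bool set)" for x
  proof -
    let ?P = "\<lambda>s. odd x \<and> 4*\<alpha>*x\<^sup>2 + \<mu>*s = 4*m"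
    have "(1 + 15) dvd y - z \<or> (1 + 15) dvd y + z" if "odd y" "odd z" and P: "?P (y\<^sup>2 + 15*z\<^sup>2)" for y z
    proof -
      have "(y\<^sup>2 + 15*z\<^sup>2) mod 32 = 16"
        using fibre_norm_mod_32[OF assms(1) conjunct1[OF P] assms(2) conjunct2[OF P]] .
      then show ?thesis using odd_norm15_mod32(2)[OF that(1,2)] by simp
    qed
    then have "{(y, z). odd y \<and> odd z \<and> ?P (y\<^sup>2 + 15*z\<^sup>2)}
        \<approx> {(c, d). odd (c + d) \<and> ?P ((1 + 15) * (c\<^sup>2 + 15*d\<^sup>2))} \<times> (UNIV :: bool set)"
      by (intro twisted_pairs_eqpoll) auto
    moreover have "{(y, z). odd y \<and> odd z \<and> ?P (y\<^sup>2 + 15*z\<^sup>2)}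
        = {(y, z). odd x \<and> odd y \<and> odd z \<and> 4*\<alpha>*x\<^sup>2 + \<mu>*y\<^sup>2 + 15*\<mu>*z\<^sup>2 = 4*m}"
      by (auto simp: algebra_simps)
    moreover have "{(c, d). odd (c + d) \<and> ?P ((1 + 15) * (c\<^sup>2 + 15*d\<^sup>2))}
        = {(c, d). odd x \<and> odd (c + d) \<and> \<alpha>*x\<^sup>2 + 4*\<mu>*c\<^sup>2 + 60*\<mu>*d\<^sup>2 = m}"
      by (auto simp: algebra_simps)
    ultimately show ?thesis by simp
  qed
  then show ?thesis unfolding odd_reps_def by (rule card_triples_fibrewise_double)
qed

lemma card_halved_eq_N:
  fixes a \<beta> \<gamma> m :: int
  assumes "odd a" "odd \<beta>" "odd \<gamma>" "4 dvd \<gamma> - a - 2" "8 dvd m - a - 4*\<beta>"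
  shows "card {(x, c, d). odd x \<and> odd (c + d) \<and> a*x\<^sup>2 + 4*\<beta>*c\<^sup>2 + 4*\<gamma>*d\<^sup>2 = m} = N a (4*\<beta>) \<gamma> m"
proof -
  let ?C = "{(x, c, d). odd x \<and> odd (c + d) \<and> a*x\<^sup>2 + 4*\<beta>*c\<^sup>2 + 4*\<gamma>*d\<^sup>2 = m}"
  let ?M = "{(x, y, z). m = a*x\<^sup>2 + 4*\<beta>*y\<^sup>2 + \<gamma>*z\<^sup>2}"
  let ?double = "\<lambda>(x, c, d). (x, c, 2*d)" and ?halve = "\<lambda>(x, y, z). (x, y, z div 2)"
  have halve: "?halve v \<in> ?C \<and> ?double (?halve v) = v" if "v \<in> ?M" for v
  proof -
    obtain x y z where v: "v = (x, y, z)" and sol: "a*x\<^sup>2 + 4*\<beta>*y\<^sup>2 + \<gamma>*z\<^sup>2 = m"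
      using \<open>v \<in> ?M\<close> by auto
    have par: "odd x \<and> even z \<and> odd (y + z div 2)" using sol by (rule solution_parities[OF assms])
    then obtain d where z: "z = 2*d" by (auto elim: evenE)
    have "a*x\<^sup>2 + 4*\<beta>*y\<^sup>2 + 4*\<gamma>*d\<^sup>2 = m" using sol unfolding z by (simp add: power_mult_distrib)
    then show ?thesis using par unfolding v z by simp
  qed
  have double: "?double u \<in> ?M \<and> ?halve (?double u) = u" if "u \<in> ?C" for u
    using that by (auto simp: power_mult_distrib)
  have "?C \<approx> ?M" by (rule eqpoll_byWitness[OF double halve])
  then show ?thesis unfolding N_def by (rule eqpoll_card)
qed

lemma t_1_4_15:
  fixes n :: int
  assumes "n mod 4 = 0"
  shows "t 1 4 15 n = 2 * N 1 4 15 (2*n + 5)"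
proof -
  have "8 dvd 2*n" using assms by presburger
  have "t 1 4 15 n = odd_reps 1 4 15 (8*n + 20)"
    by (simp add: t_eq_odd_reps add.commute)
  also have "\<dots> = odd_reps 4 1 15 (8*n + 20)"
    by (rule odd_reps_swap12)
  also have "\<dots> = 2 * card {(x, c, d). odd x \<and> odd (c + d) \<and> x\<^sup>2 + 4*c\<^sup>2 + 60*d\<^sup>2 = 2*n + 5}"
    using odd_reps_twist15[of 1 "2*n + 5" 1] \<open>8 dvd 2*n\<close> by (simp add: ac_simps)
  also have "\<dots> = 2 * N 1 4 15 (2*n + 5)"
    using card_halved_eq_N[of 1 1 15 "2*n + 5"] \<open>8 dvd 2*n\<close> by (simp add: ac_simps)
  finally show ?thesis .
qed

lemma t_1_12_15:
  fixes n :: int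
  assumes "n mod 4 = 2"
  shows "t 1 12 15 n = 2 * N 1 12 15 (2*n + 7)"
proof -
  have "8 dvd 2*n + 4" "8 dvd 2*n - 20" using assms by presburger+
  have "t 1 12 15 n = odd_reps 1 12 15 (8*n + 28)"
    by (simp add: t_eq_odd_reps add.commute)
  also have "\<dots> = odd_reps 12 1 15 (8*n + 28)"
    by (rule odd_reps_swap12)
  also have "\<dots> = odd_reps 3 1 15 (2*n + 7)"
    using odd_reps_quarter[of 1 "2*n + 7" 3] \<open>8 dvd 2*n + 4\<close> by (simp add: ac_simps)
  also have "\<dots> = odd_reps 15 1 3 (2*n + 7)"
    by (metis odd_reps_swap12 odd_reps_swap23)
  also have "\<dots> = 2 * card {(x, c, d). odd x \<and> odd (c + d) \<and> 15*x\<^sup>2 + 4*c\<^sup>2 + 12*d\<^sup>2 = 2*n + 7}"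
    using odd_reps_twist3[of 15 1 "2*n + 7"] by simp
  also have "\<dots> = 2 * card {(x, c, d). odd x \<and> odd (c + d) \<and> 15*x\<^sup>2 + 12*c\<^sup>2 + 4*d\<^sup>2 = 2*n + 7}"
    by (subst card_swap23) (simp add: ac_simps)
  also have "\<dots> = 2 * N 15 12 1 (2*n + 7)"
    using card_halved_eq_N[of 15 3 1 "2*n + 7"] \<open>8 dvd 2*n - 20\<close> by (simp add: ac_simps)
  also have "\<dots> = 2 * N 1 12 15 (2*n + 7)"
    by (metis N_swap12 N_swap23)
  finally show ?thesis .
qed

lemma t_1_15_20:
  fixes n :: int
  assumes "n mod 4 = 2"
  shows "t 1 15 20 n = 2 * N 1 15 20 (2*n + 9)"
proof -
  have "8 dvd 2*n + 4" "8 dvd 2*n - 12" using assms by presburger+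
  have "t 1 15 20 n = odd_reps 1 15 20 (8*n + 36)"
    by (simp add: t_eq_odd_reps add.commute)
  also have "\<dots> = odd_reps 20 1 15 (8*n + 36)"
    by (metis odd_reps_swap12 odd_reps_swap23)
  also have "\<dots> = odd_reps 5 1 15 (2*n + 9)"
    using odd_reps_quarter[of 1 "2*n + 9" 5] \<open>8 dvd 2*n + 4\<close> by (simp add: ac_simps)
  also have "\<dots> = odd_reps 1 5 15 (2*n + 9)"
    by (rule odd_reps_swap12)
  also have "\<dots> = 2 * card {(x, c, d). odd x \<and> odd (c + d) \<and> x\<^sup>2 + 20*c\<^sup>2 + 60*d\<^sup>2 = 2*n + 9}"
    using odd_reps_twist3[of 1 5 "2*n + 9"] by simp
  also have "\<dots> = 2 * N 1 20 15 (2*n + 9)"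
    using card_halved_eq_N[of 1 5 15 "2*n + 9"] \<open>8 dvd 2*n - 12\<close> by (simp add: ac_simps)
  also have "\<dots> = 2 * N 1 15 20 (2*n + 9)"
    by (simp add: N_swap23[of 1 20])
  finally show ?thesis .
qed

lemma t_3_4_45:
  fixes n :: int
  assumes "n mod 4 = 2"
  shows "t 3 4 45 n = 2 * N 3 4 45 (2*n + 13)"
proof -
  have "8 dvd 2*n + 12" "8 dvd 2*n - 36" using assms by presburger+
  have "t 3 4 45 n = odd_reps 3 4 45 (8*n + 52)"
    by (simp add: t_eq_odd_reps add.commute)
  also have "\<dots> = odd_reps 4 3 45 (8*n + 52)"
    by (rule odd_reps_swap12)
  also have "\<dots> = odd_reps 1 3 45 (2*n + 13)"
    using odd_reps_quarter[of 3 "2*n + 13" 1] \<open>8 dvd 2*n + 12\<close> by (simp add: ac_simps)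
  also have "\<dots> = odd_reps 45 1 3 (2*n + 13)"
    by (metis odd_reps_swap12 odd_reps_swap23)
  also have "\<dots> = 2 * card {(x, c, d). odd x \<and> odd (c + d) \<and> 45*x\<^sup>2 + 4*c\<^sup>2 + 12*d\<^sup>2 = 2*n + 13}"
    using odd_reps_twist3[of 45 1 "2*n + 13"] by simp
  also have "\<dots> = 2 * N 45 4 3 (2*n + 13)"
    using card_halved_eq_N[of 45 1 3 "2*n + 13"] \<open>8 dvd 2*n - 36\<close> by (simp add: ac_simps)
  also have "\<dots> = 2 * N 3 4 45 (2*n + 13)"
    by (metis N_swap12 N_swap23)
  finally show ?thesis .
qed

theorem theorem6p2:
  fixes n :: int
  assumes "n > 0"
  shows "(n mod 4 = 0 \<longrightarrow> t 1 4 15 n = 2 * N 1 4 15 (2 * n + 5))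
       \<and> (n mod 4 = 2 \<longrightarrow> t 1 12 15 n = 2 * N 1 12 15 (2 * n + 7))
       \<and> (n mod 4 = 2 \<longrightarrow> t 1 15 20 n = 2 * N 1 15 20 (2 * n + 9))
       \<and> (n mod 4 = 2 \<longrightarrow> t 3 4 45 n = 2 * N 3 4 45 (2 * n + 13))"
  using t_1_4_15 t_1_12_15 t_1_15_20 t_3_4_45 by simp

end
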